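(* Let $m\geq4$ be an integer, let $G$ be an $m$-free digraph, let $v\in V(G)$ and let $k$ be an integer with $1\leq k\leq m-3$. Put $V_1=\bigcup_{i=1}^{k+1}N_i^-(v)$ and $V_2=V(G)\setminus V_1$. Then the set of edges of $G$ from $V_2$ to $V_1$ equals $E(N^-_{k+2}(v),N^-_{k+1}(v))$, so it has exactly $r'_k(v)$ elements, and the number of pairs $(a,b)\in V_1\times V_2$ such that neither $(a,b)$ nor $(b,a)$ is an edge is at least $t_k(v)$.
   Context: All digraphs are finite, without loops and without parallel edges. A digraph is $m$-free if it has no directed cycle of length at most $m$. For a vertex $v$ and $i\geq 0$, $N_i^+(v)$ is the set of vertices $u$ such that the shortest directed path from $v$ to $u$ has length exactly $i$, and $N_i^-(v)$ is the set of vertices $u$ such that the shortest directed path from $u$ to $v$ has length exactly $i$. For $A,B\subseteq V(G)$, $E(A,B)$ is the set of edges $(a,b)$ with $a\in A$, $b\in B$. A directed path $(v_0,\dots,v_k)$ consists of distinct vertices with $(v_i,v_{i+1})$ an edge for each $i$; its length is $k$. It is induced if every edge of $G$ with both ends in $\{v_0,\dots,v_k\}$ is one of the edges $(v_i,v_{i+1})$; it is a shortest induced directed path if it is induced and $v_k\in N_k^+(v_0)$. Let $\mathscr{P}(G)$ be the set of shortest induced directed paths of $G$. For an integer $k\geq1$ and $v\in V(G)$: $Q_k(v)$ (resp. $R_k(v)$) is the set of triples $(x,y,z)$ of vertices for which there exist vertices $w_1,\dots,w_k$ with $(x,w_1,\dots,w_k,y,z)\in\mathscr{P}(G)$ and $y=v$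 (resp. $z=v$). $R'_k(v)$ is the set of triples $(x,y,z)$ for which there exist $w_1,\dots,w_k$ with $(x,y,w_1,\dots,w_k,z)\in\mathscr{P}(G)$ and $z=v$. $q_k(v)=|Q_k(v)|$, $r_k(v)=|R_k(v)|$, $r'_k(v)=|R'_k(v)|$. For $1\leq k\leq m-3$: $t_k(v)=\sum_{i=k}^{m-3}r_i(v)+\sum_{i=1}^{k}q_i(v)$. *)

theory Defs
  imports Main
begin

definition digraph :: "'a set \<Rightarrow> ('a \<times> 'a) set \<Rightarrow> bool" where
  "digraph V E \<longleftrightarrow> finite V \<and> E \<subseteq> V \<times> V \<and> (\<forall>x. (x, x) \<notin> E)"

text \<open>Directed path given by its vertex list (v_0, ..., v_k); its length is k.\<close>
definition dpath :: "'a set \<Rightarrow> ('a \<times> 'a) set \<Rightarrow> 'a list \<Rightarrow> bool" where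
  "dpath V E xs \<longleftrightarrow> xs \<noteq> [] \<and> distinct xs \<and> set xs \<subseteq> V \<and>
     (\<forall>i. Suc i < length xs \<longrightarrow> (xs ! i, xs ! Suc i) \<in> E)"

text \<open>Directed cycle on the vertex list xs (distinct vertices, closing edge last -> first);
its length is length xs.\<close>
definition dcycle :: "'a set \<Rightarrow> ('a \<times> 'a) set \<Rightarrow> 'a list \<Rightarrow> bool" where
  "dcycle V E xs \<longleftrightarrow> dpath V E xs \<and> (last xs, hd xs) \<in> E"

definition m_free :: "nat \<Rightarrow> 'a set \<Rightarrow> ('a \<times> 'a) set \<Rightarrow> bool" where
  "m_free m V E \<longleftrightarrow> \<not> (\<exists>xs. dcycle V E xs \<and> length xs \<le> m)"

definition path_len :: "'a set \<Rightarrow> ('a \<times> 'a) set \<Rightarrow> 'a \<Rightarrow> 'a \<Rightarrow> nat \<Rightarrow> bool" where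
  "path_len V E u w i \<longleftrightarrow> (\<exists>xs. dpath V E xs \<and> hd xs = u \<and> last xs = w \<and> length xs = Suc i)"

definition dist_is :: "'a set \<Rightarrow> ('a \<times> 'a) set \<Rightarrow> 'a \<Rightarrow> 'a \<Rightarrow> nat \<Rightarrow> bool" where
  "dist_is V E u w i \<longleftrightarrow> path_len V E u w i \<and> (\<forall>j<i. \<not> path_len V E u w j)"

definition Nout :: "'a set \<Rightarrow> ('a \<times> 'a) set \<Rightarrow> nat \<Rightarrow> 'a \<Rightarrow> 'a set" where
  "Nout V E i v = {u \<in> V. dist_is V E v u i}"

definition Nin :: "'a set \<Rightarrow> ('a \<times> 'a) set \<Rightarrow> nat \<Rightarrow> 'a \<Rightarrow> 'a set" where
  "Nin V E i v = {u \<in> V. dist_is V E u v i}"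

definition induced_path :: "'a set \<Rightarrow> ('a \<times> 'a) set \<Rightarrow> 'a list \<Rightarrow> bool" where
  "induced_path V E xs \<longleftrightarrow> dpath V E xs \<and>
     (\<forall>i j. i < length xs \<longrightarrow> j < length xs \<longrightarrow> (xs ! i, xs ! j) \<in> E \<longrightarrow> j = Suc i)"

definition SIP :: "'a set \<Rightarrow> ('a \<times> 'a) set \<Rightarrow> 'a list set" where
  "SIP V E = {xs. induced_path V E xs \<and> last xs \<in> Nout V E (length xs - 1) (hd xs)}"

definition Qset :: "'a set \<Rightarrow> ('a \<times> 'a) set \<Rightarrow> nat \<Rightarrow> 'a \<Rightarrow> ('a \<times> 'a \<times> 'a) set" where
  "Qset V E k v = {(x, y, z). \<exists>ws. length ws = k \<and> x # ws @ [y, z] \<in> SIP V E \<and> y = v}"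

definition Rset :: "'a set \<Rightarrow> ('a \<times> 'a) set \<Rightarrow> nat \<Rightarrow> 'a \<Rightarrow> ('a \<times> 'a \<times> 'a) set" where
  "Rset V E k v = {(x, y, z). \<exists>ws. length ws = k \<and> x # ws @ [y, z] \<in> SIP V E \<and> z = v}"

definition R'set :: "'a set \<Rightarrow> ('a \<times> 'a) set \<Rightarrow> nat \<Rightarrow> 'a \<Rightarrow> ('a \<times> 'a \<times> 'a) set" where
  "R'set V E k v = {(x, y, z). \<exists>ws. length ws = k \<and> x # y # ws @ [z] \<in> SIP V E \<and> z = v}"

definition qk :: "'a set \<Rightarrow> ('a \<times> 'a) set \<Rightarrow> nat \<Rightarrow> 'a \<Rightarrow> nat" where
  "qk V E k v = card (Qset V E k v)"

definition rk :: "'a set \<Rightarrow> ('a \<times> 'a) set \<Rightarrow> nat \<Rightarrow> 'a \<Rightarrow> nat" where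
  "rk V E k v = card (Rset V E k v)"

definition r'k :: "'a set \<Rightarrow> ('a \<times> 'a) set \<Rightarrow> nat \<Rightarrow> 'a \<Rightarrow> nat" where
  "r'k V E k v = card (R'set V E k v)"

definition tk :: "nat \<Rightarrow> 'a set \<Rightarrow> ('a \<times> 'a) set \<Rightarrow> nat \<Rightarrow> 'a \<Rightarrow> nat" where
  "tk m V E k v = (\<Sum>i = k..m - 3. rk V E i v) + (\<Sum>i = 1..k. qk V E i v)"

definition Eset :: "('a \<times> 'a) set \<Rightarrow> 'a set \<Rightarrow> 'a set \<Rightarrow> ('a \<times> 'a) set" where
  "Eset E A B = {(a, b) \<in> E. a \<in> A \<and> b \<in> B}"

end

theory Submission imports Defs begin

(* In an m-free
   digraph a short shortest path is moreover induced, since a forward chord would give a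
   shortcut and a backward chord a directed cycle of length at most m.
   Write B = inball (k+1) v for the vertices at in-distance 1..k+1 from v.
   (1) An edge from V - B into B starts at in-distance k+2 and ends at in-distance k+1:
       its tail is at distance at most one more than its head, and tail = v would close
       a short cycle.
   (2) The triples of R'_k(v) are exactly the edges of (1) extended by v: such an edge
       followed by a shortest path to v is a shortest path, hence induced.
   (3) A triple (x,y,v) of R_i(v), i >= k, yields the non-adjacent pair (y,x) of B x (V - B),
       and a triple (x,v,z) of Q_i(v), i <= k, yields the non-adjacent pair (x,z).  These
       maps are injective, and the in-distances of the components separate the images
       for different i, so summing their sizes gives t_k(v) <= #non-adjacent pairs. *)

section \<open>Directed paths\<close>

lemma dpath_slice:
  assumes "dpath V E xs" "j \<le> i" "i < length xs"
  shows "dpath V E (drop j (take (Suc i) xs))"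
    and "hd (drop j (take (Suc i) xs)) = xs ! j"
    and "last (drop j (take (Suc i) xs)) = xs ! i"
    and "length (drop j (take (Suc i) xs)) = Suc i - j"
proof -
  have len: "length (drop j (take (Suc i) xs)) = Suc i - j" using assms by simp
  have nth: "\<And>l. l < Suc i - j \<Longrightarrow> drop j (take (Suc i) xs) ! l = xs ! (j + l)"
    using assms by simp
  show "length (drop j (take (Suc i) xs)) = Suc i - j" by (rule len)
  show "dpath V E (drop j (take (Suc i) xs))"
    unfolding dpath_def
  proof (intro conjI allI impI)
    show "drop j (take (Suc i) xs) \<noteq> []" using len assms by auto
    show "distinct (drop j (take (Suc i) xs))" using assms(1) by (simp add: dpath_def)
    show "set (drop j (take (Suc i) xs)) \<subseteq> V" using assms(1) unfolding dpath_def
      by (meson dual_order.trans set_drop_subset set_take_subset)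
    fix l assume l: "Suc l < length (drop j (take (Suc i) xs))"
    then have "(xs ! (j + l), xs ! Suc (j + l)) \<in> E" using assms unfolding dpath_def by auto
    then show "(drop j (take (Suc i) xs) ! l, drop j (take (Suc i) xs) ! Suc l) \<in> E"
      using nth[of l] nth[of "Suc l"] l len by simp
  qed
  show "hd (drop j (take (Suc i) xs)) = xs ! j"
    using assms by (simp add: hd_drop_conv_nth)
  show "last (drop j (take (Suc i) xs)) = xs ! i"
    using assms len nth[of "i - j"] by (simp add: last_conv_nth)
qed

lemma path_len_slice:
  assumes "dpath V E xs" "j \<le> i" "i < length xs"
  shows "path_len V E (xs ! j) (xs ! i) (i - j)"
  unfolding path_len_def using dpath_slice[OF assms] assms
  by (intro exI[of _ "drop j (take (Suc i) xs)"]) auto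

lemma path_len_0: "path_len V E u w 0 \<Longrightarrow> u = w"
  unfolding path_len_def by (auto simp: length_Suc_conv)

lemma path_len_edge:
  assumes "digraph V E" "(a, b) \<in> E"
  shows "path_len V E a b 1"
  unfolding path_len_def using assms
  by (intro exI[of _ "[a, b]"]) (auto simp: dpath_def digraph_def less_Suc_eq)

lemma dpath_Cons:
  assumes "dpath V E ys" "hd ys = b" "(a, b) \<in> E" "a \<in> V" "a \<notin> set ys"
  shows "dpath V E (a # ys)"
  unfolding dpath_def
proof (intro conjI allI impI)
  show "distinct (a # ys)" "set (a # ys) \<subseteq> V" using assms by (auto simp: dpath_def)
  fix l assume l: "Suc l < length (a # ys)"
  show "((a # ys) ! l, (a # ys) ! Suc l) \<in> E"
  proof (cases l)
    case 0 then show ?thesis using assms by (cases ys) (auto simp: dpath_def)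
  next
    case (Suc l') then show ?thesis using l assms(1) by (auto simp: dpath_def)
  qed
qed simp

text \<open>Prepending an edge to a path of length i gives a path of length at most i + 1:
  either the new vertex is fresh, or the path already passes through it.\<close>
lemma path_len_prepend:
  assumes "digraph V E" "(a, b) \<in> E" "path_len V E b w i"
  shows "\<exists>j\<le>Suc i. path_len V E a w j"
proof -
  obtain ys where ys: "dpath V E ys" "hd ys = b" "last ys = w" "length ys = Suc i"
    using assms(3) unfolding path_len_def by blast
  show ?thesis
  proof (cases "a \<in> set ys")
    case True
    then obtain p where p: "p < length ys" "ys ! p = a" by (auto simp: in_set_conv_nth)
    have "ys ! i = w" using ys last_conv_nth[of ys] by (cases "ys = []") auto
    then have "path_len V E a w (i - p)" using path_len_slice[OF ys(1), of p i] p ys by simp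
    then show ?thesis by (intro exI[of _ "i - p"]) auto
  next
    case False
    have "a \<in> V" using assms(1,2) by (auto simp: digraph_def)
    with ys False assms(2) have "dpath V E (a # ys)" by (intro dpath_Cons) auto
    then have "path_len V E a w (Suc i)" unfolding path_len_def using ys
      by (intro exI[of _ "a # ys"]) auto
    then show ?thesis by blast
  qed
qed

lemma path_len_Suc_split:
  assumes "path_len V E u w (Suc n)"
  shows "\<exists>u'. (u, u') \<in> E \<and> path_len V E u' w n"
proof -
  obtain ys where ys: "dpath V E ys" "hd ys = u" "last ys = w" "length ys = Suc (Suc n)"
    using assms unfolding path_len_def by blast
  have "(ys ! 0, ys ! Suc 0) \<in> E" using ys(1,4) by (simp add: dpath_def)
  moreover have "ys ! 0 = u" using ys hd_conv_nth[of ys] by (cases "ys = []") auto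
  moreover have "ys ! Suc n = w" using ys last_conv_nth[of ys] by (cases "ys = []") auto
  moreover have "path_len V E (ys ! Suc 0) (ys ! Suc n) n"
    using path_len_slice[OF ys(1), of "Suc 0" "Suc n"] ys(4) by simp
  ultimately show ?thesis by auto
qed

lemma path_len_trans:
  assumes "digraph V E" "path_len V E u w a" "path_len V E w x b"
  shows "\<exists>c\<le>a + b. path_len V E u x c"
  using assms(2)
proof (induction a arbitrary: u)
  case 0
  then have "u = w" by (rule path_len_0)
  then show ?case using assms(3) by auto
next
  case (Suc a)
  obtain u' where u': "(u, u') \<in> E" "path_len V E u' w a"
    using path_len_Suc_split[OF Suc.prems] by blast
  obtain c where c: "c \<le> a + b" "path_len V E u' x c" using Suc.IH[OF u'(2)] by blast
  obtain j where "j \<le> Suc c" "path_len V E u x j" using path_len_prepend[OF assms(1) u'(1) c(2)] by blast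
  then show ?case using c(1) by (intro exI[of _ j]) auto
qed

section \<open>Distances\<close>

lemma dist_exists:
  assumes "path_len V E u w n" shows "\<exists>d\<le>n. dist_is V E u w d"
proof -
  let ?d = "LEAST l. path_len V E u w l"
  have "path_len V E u w ?d" using assms by (rule LeastI)
  moreover have "\<forall>j<?d. \<not> path_len V E u w j" using not_less_Least by blast
  moreover have "?d \<le> n" using assms by (rule Least_le)
  ultimately show ?thesis unfolding dist_is_def by blast
qed

lemma dist_le: "dist_is V E u w d \<Longrightarrow> path_len V E u w n \<Longrightarrow> d \<le> n"
  unfolding dist_is_def using not_less by blast

lemma dist_unique: "dist_is V E u w i \<Longrightarrow> dist_is V E u w j \<Longrightarrow> i = j"
  unfolding dist_is_def by (meson linorder_neqE_nat)

definition shortest_dpath :: "'a set \<Rightarrow> ('a \<times> 'a) set \<Rightarrow> 'a list \<Rightarrow> bool" where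
  "shortest_dpath V E xs \<longleftrightarrow> dpath V E xs \<and> dist_is V E (hd xs) (last xs) (length xs - 1)"

text \<open>Every slice of a shortest path is a shortest path: a shortcut of the slice would
  shortcut the whole path.\<close>
lemma shortest_dpath_slice:
  assumes "digraph V E" "shortest_dpath V E xs" "i \<le> j" "j < length xs"
  shows "dist_is V E (xs ! i) (xs ! j) (j - i)"
proof -
  let ?n = "length xs"
  have dp: "dpath V E xs" and dist: "dist_is V E (hd xs) (last xs) (?n - 1)"
    using assms(2) by (auto simp: shortest_dpath_def)
  have ne: "xs \<noteq> []" using assms(4) by auto
  have hd: "xs ! 0 = hd xs" and last: "xs ! (?n - 1) = last xs"
    using ne by (simp_all add: hd_conv_nth last_conv_nth)
  have no_shortcut: "\<not> path_len V E (xs ! i) (xs ! j) l" if "l < j - i" for l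
  proof
    assume "path_len V E (xs ! i) (xs ! j) l"
    moreover have "path_len V E (hd xs) (xs ! i) i"
      using path_len_slice[OF dp, of 0 i] assms hd by simp
    ultimately obtain c where c: "c \<le> i + l" "path_len V E (hd xs) (xs ! j) c"
      using path_len_trans[OF assms(1)] by blast
    moreover have "path_len V E (xs ! j) (last xs) (?n - 1 - j)"
      using path_len_slice[OF dp, of j "?n - 1"] assms last by simp
    ultimately obtain c' where "c' \<le> c + (?n - 1 - j)" "path_len V E (hd xs) (last xs) c'"
      using path_len_trans[OF assms(1)] by blast
    then show False using dist_le[OF dist] c(1) that assms(4) by fastforce
  qed
  then show ?thesis
    using path_len_slice[OF dp assms(3,4)] by (simp add: dist_is_def)
qed

section \<open>Shortest paths in m-free digraphs\<close>

lemma no_short_cycle: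
  assumes "m_free m V E" "(a, b) \<in> E" "path_len V E b a i" "Suc i \<le> m"
  shows False
proof -
  obtain xs where xs: "dpath V E xs" "hd xs = b" "last xs = a" "length xs = Suc i"
    using assms(3) unfolding path_len_def by blast
  have "dcycle V E xs" unfolding dcycle_def using xs assms(2) by simp
  then show False using assms(1,4) xs unfolding m_free_def by auto
qed

text \<open>In an m-free digraph a shortest path on at most m vertices is induced: a backward
  chord would close a cycle of length at most m, a forward chord would be a shortcut.\<close>
lemma shortest_dpath_induced:
  assumes "digraph V E" "m_free m V E" "shortest_dpath V E xs" "length xs \<le> m"
  shows "induced_path V E xs"
  unfolding induced_path_def
proof (intro conjI allI impI)
  let ?n = "length xs"
  show dp: "dpath V E xs" using assms(3) by (simp add: shortest_dpath_def)
  fix i j assume ij: "i < ?n" "j < ?n" and chord: "(xs ! i, xs ! j) \<in> E"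
  show "j = Suc i"
  proof (rule ccontr)
    assume "j \<noteq> Suc i"
    then consider "j \<le> i" | "Suc i < j" by linarith
    then show False
    proof cases
      case 1
      have "path_len V E (xs ! j) (xs ! i) (i - j)" using path_len_slice[OF dp 1 ij(1)] .
      moreover have "Suc (i - j) \<le> m" using 1 ij assms(4) by simp
      ultimately show False by (rule no_short_cycle[OF assms(2) chord])
    next
      case 2
      have dist: "dist_is V E (xs ! 0) (xs ! (?n - 1)) (?n - 1)"
        using shortest_dpath_slice[OF assms(1,3), of 0 "?n - 1"] ij by simp
      have "path_len V E (xs ! 0) (xs ! i) i" using path_len_slice[OF dp, of 0 i] ij by simp
      then obtain c where c: "c \<le> i + 1" "path_len V E (xs ! 0) (xs ! j) c"
        using path_len_trans[OF assms(1) _ path_len_edge[OF assms(1) chord]] by blast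
      moreover have "path_len V E (xs ! j) (xs ! (?n - 1)) (?n - 1 - j)"
        using path_len_slice[OF dp, of j "?n - 1"] ij by simp
      ultimately obtain c' where "c' \<le> c + (?n - 1 - j)" "path_len V E (xs ! 0) (xs ! (?n - 1)) c'"
        using path_len_trans[OF assms(1)] by blast
      then show False using dist_le[OF dist] c(1) 2 ij(2) by fastforce
    qed
  qed
qed

lemma SIP_iff: "xs \<in> SIP V E \<longleftrightarrow> induced_path V E xs \<and> shortest_dpath V E xs"
proof -
  have "induced_path V E xs \<Longrightarrow> dpath V E xs" by (simp add: induced_path_def)
  moreover have "dpath V E xs \<Longrightarrow> last xs \<in> V" unfolding dpath_def using last_in_set by blast
  ultimately show ?thesis by (auto simp: SIP_def Nout_def shortest_dpath_def)
qed

lemma induced_path_no_chord: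
  "induced_path V E xs \<Longrightarrow> i < length xs \<Longrightarrow> j < length xs \<Longrightarrow> j \<noteq> Suc i \<Longrightarrow> (xs ! i, xs ! j) \<notin> E"
  unfolding induced_path_def by blast

lemma SIP_last_two:
  assumes "digraph V E" "x # ws @ [y, z] \<in> SIP V E" "length ws = i"
  shows "(y, z) \<in> E" and "x \<in> V" and "y \<in> V" and "z \<in> V"
    and "dist_is V E x y (i + 1)" and "dist_is V E y z 1" and "dist_is V E x z (i + 2)"
    and "(y, x) \<notin> E" and "(x, z) \<notin> E" and "(z, x) \<notin> E"
    and "1 \<le> i \<Longrightarrow> (x, y) \<notin> E"
proof -
  define xs where "xs = x # ws @ [y, z]"
  have ind: "induced_path V E xs" and sh: "shortest_dpath V E xs"
    using assms(2) by (simp_all add: SIP_iff xs_def)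
  have dp: "dpath V E xs" using sh by (simp add: shortest_dpath_def)
  have len: "length xs = i + 3" using assms(3) by (simp add: xs_def)
  have n0: "xs ! 0 = x" and n1: "xs ! Suc i = y" and n2: "xs ! Suc (Suc i) = z"
    using assms(3) by (simp_all add: xs_def nth_append)
  have "(xs ! Suc i, xs ! Suc (Suc i)) \<in> E" using dp len by (simp add: dpath_def)
  then show "(y, z) \<in> E" using n1 n2 by simp
  show "x \<in> V" "y \<in> V" "z \<in> V" using dp by (auto simp: dpath_def xs_def)
  show "dist_is V E x y (i + 1)" using shortest_dpath_slice[OF assms(1) sh, of 0 "Suc i"] len n0 n1 by simp
  show "dist_is V E y z 1" using shortest_dpath_slice[OF assms(1) sh, of "Suc i" "Suc (Suc i)"] len n1 n2 by simp
  show "dist_is V E x z (i + 2)" using shortest_dpath_slice[OF assms(1) sh, of 0 "Suc (Suc i)"] len n0 n2 by simp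
  show "(y, x) \<notin> E" using induced_path_no_chord[OF ind, of "Suc i" 0] len n0 n1 by simp
  show "(x, z) \<notin> E" using induced_path_no_chord[OF ind, of 0 "Suc (Suc i)"] len n0 n2 by simp
  show "(z, x) \<notin> E" using induced_path_no_chord[OF ind, of "Suc (Suc i)" 0] len n0 n2 by simp
  show "(x, y) \<notin> E" if "1 \<le> i" using induced_path_no_chord[OF ind, of 0 "Suc i"] len n0 n1 that by simp
qed

section \<open>The in-ball around v and the edges entering it\<close>

definition inball :: "'a set \<Rightarrow> ('a \<times> 'a) set \<Rightarrow> nat \<Rightarrow> 'a \<Rightarrow> 'a set" where
  "inball V E r v = (\<Union>i\<in>{1..r}. Nin V E i v)"

lemma mem_inball:
  "x \<in> inball V E r v \<longleftrightarrow> x \<in> V \<and> (\<exists>i. 1 \<le> i \<and> i \<le> r \<and> dist_is V E x v i)"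
  by (auto simp: inball_def Nin_def)

definition cross_nonedges :: "'a set \<Rightarrow> ('a \<times> 'a) set \<Rightarrow> 'a set \<Rightarrow> ('a \<times> 'a) set" where
  "cross_nonedges V E A = {(a, b) \<in> A \<times> (V - A). (a, b) \<notin> E \<and> (b, a) \<notin> E}"

lemma edges_entering_inball:
  assumes "digraph V E" "m_free m V E" "1 \<le> r" "r + 1 \<le> m"
  shows "Eset E (V - inball V E r v) (inball V E r v) = Eset E (Nin V E (Suc r) v) (Nin V E r v)"
proof (rule set_eqI, rule iffI)
  fix e assume "e \<in> Eset E (V - inball V E r v) (inball V E r v)"
  then obtain a b where e: "e = (a, b)" "(a, b) \<in> E" "a \<in> V" "a \<notin> inball V E r v"
    and b: "b \<in> inball V E r v" by (auto simp: Eset_def)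
  from b obtain i where i: "1 \<le> i" "i \<le> r" "dist_is V E b v i" "b \<in> V" by (auto simp: mem_inball)
  have pb: "path_len V E b v i" using i(3) by (simp add: dist_is_def)
  then obtain j where j: "j \<le> Suc i" "path_len V E a v j" using path_len_prepend[OF assms(1) e(2)] by blast
  obtain d where d: "d \<le> j" "dist_is V E a v d" using dist_exists[OF j(2)] by blast
  have "d \<noteq> 0"
  proof
    assume "d = 0"
    then have "a = v" using d(2) path_len_0 by (auto simp: dist_is_def)
    then have "path_len V E b a i" using pb by simp
    moreover have "Suc i \<le> m" using i(2) assms(4) by simp
    ultimately show False by (rule no_short_cycle[OF assms(2) e(2)])
  qed
  have "\<not> d \<le> r"
  proof
    assume "d \<le> r"
    with \<open>d \<noteq> 0\<close> have "a \<in> inball V E r v" using e(3) d(2) by (auto simp: mem_inball intro!: exI[of _ d])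
    then show False using e(4) by simp
  qed
  then have "d = Suc r" "i = r" using d(1) j(1) i(2) by linarith+
  then show "e \<in> Eset E (Nin V E (Suc r) v) (Nin V E r v)" using e i d
    by (auto simp: Eset_def Nin_def)
next
  fix e assume "e \<in> Eset E (Nin V E (Suc r) v) (Nin V E r v)"
  then obtain a b where e: "e = (a, b)" "(a, b) \<in> E" "a \<in> V" "dist_is V E a v (Suc r)"
    "b \<in> V" "dist_is V E b v r" by (auto simp: Eset_def Nin_def)
  have "a \<notin> inball V E r v"
  proof
    assume "a \<in> inball V E r v"
    then obtain i where "i \<le> r" "dist_is V E a v i" by (auto simp: mem_inball)
    then show False using dist_unique[OF e(4), of i] by simp
  qed
  moreover have "b \<in> inball V E r v" using e(5,6) assms(3) by (auto simp: mem_inball)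
  ultimately show "e \<in> Eset E (V - inball V E r v) (inball V E r v)" using e by (auto simp: Eset_def)
qed

text \<open>An edge (x, y) from in-distance k + 2 to in-distance k + 1, followed by a shortest path
  from y to v, is a shortest path on k + 3 \<le> m vertices and hence a shortest induced path.\<close>
lemma edge_then_shortest_path_SIP:
  assumes "digraph V E" "m_free m V E" "k + 3 \<le> m" "(x, y) \<in> E"
    and x: "dist_is V E x v (k + 2)" and y: "dist_is V E y v (k + 1)"
  shows "\<exists>ws. length ws = k \<and> x # y # ws @ [v] \<in> SIP V E"
proof -
  obtain ys where ys: "dpath V E ys" "hd ys = y" "last ys = v" "length ys = k + 2"
    using y by (auto simp: dist_is_def path_len_def)
  have x_fresh: "x \<notin> set ys"
  proof
    assume "x \<in> set ys"
    then obtain p where p: "p < length ys" "ys ! p = x" by (auto simp: in_set_conv_nth)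
    have "ys ! (k + 1) = v" using ys last_conv_nth[of ys] by (cases "ys = []") auto
    then have "path_len V E x v (k + 1 - p)"
      using path_len_slice[OF ys(1), of p "k + 1"] p ys(4) by simp
    then have "k + 2 \<le> k + 1 - p" by (rule dist_le[OF x])
    then show False by simp
  qed
  have "x \<in> V" using assms(1,4) by (auto simp: digraph_def)
  with ys x_fresh assms(4) x have "shortest_dpath V E (x # ys)"
    by (auto simp: shortest_dpath_def intro: dpath_Cons)
  moreover have "induced_path V E (x # ys)"
    using shortest_dpath_induced[OF assms(1,2) calculation] ys(4) assms(3) by simp
  moreover obtain ws where "ys = y # ws @ [v]" "length ws = k"
  proof -
    obtain rest where rest: "ys = y # rest" "rest \<noteq> []"
      using ys by (cases ys) fastforce+
    then have "ys = y # butlast rest @ [v]" using ys(3) append_butlast_last_id[of rest] by simp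
    then show ?thesis using that ys(4) by fastforce
  qed
  ultimately show ?thesis by (auto simp: SIP_iff)
qed

lemma R'set_eq_edges:
  assumes "digraph V E" "m_free m V E" "v \<in> V" "k + 3 \<le> m"
  shows "R'set V E k v = (\<lambda>(x, y). (x, y, v)) ` Eset E (Nin V E (k + 2) v) (Nin V E (k + 1) v)"
proof (rule set_eqI, rule iffI)
  fix t assume "t \<in> R'set V E k v"
  then obtain x y ws where t: "t = (x, y, v)" "length ws = k" "x # y # ws @ [v] \<in> SIP V E"
    by (auto simp: R'set_def)
  define xs where "xs = x # y # ws @ [v]"
  have sh: "shortest_dpath V E xs" using t(3) by (simp add: SIP_iff xs_def)
  then have dp: "dpath V E xs" by (simp add: shortest_dpath_def)
  have len: "length xs = k + 3" using t(2) by (simp add: xs_def)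
  have last: "xs ! Suc (Suc k) = v" using t(2) by (simp add: xs_def nth_append)
  have "x \<in> V" "y \<in> V" using dp by (auto simp: dpath_def xs_def)
  moreover have "(x, y) \<in> E" using dp len by (auto simp: dpath_def xs_def)
  moreover have "dist_is V E x v (k + 2)"
    using shortest_dpath_slice[OF assms(1) sh, of 0 "Suc (Suc k)"] len last by (simp add: xs_def)
  moreover have "dist_is V E y v (k + 1)"
    using shortest_dpath_slice[OF assms(1) sh, of 1 "Suc (Suc k)"] len last by (simp add: xs_def)
  ultimately show "t \<in> (\<lambda>(x, y). (x, y, v)) ` Eset E (Nin V E (k + 2) v) (Nin V E (k + 1) v)"
    unfolding t(1) by (intro image_eqI[of _ _ "(x, y)"]) (auto simp: Eset_def Nin_def)
next
  fix t assume "t \<in> (\<lambda>(x, y). (x, y, v)) ` Eset E (Nin V E (k + 2) v) (Nin V E (k + 1) v)"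
  then obtain x y where t: "t = (x, y, v)" "(x, y) \<in> E" "dist_is V E x v (k + 2)"
    "dist_is V E y v (k + 1)" by (auto simp: Eset_def Nin_def)
  then show "t \<in> R'set V E k v"
    using edge_then_shortest_path_SIP[OF assms(1,2,4) t(2-4)] by (auto simp: R'set_def)
qed

lemma card_R'set:
  assumes "digraph V E" "m_free m V E" "v \<in> V" "k + 3 \<le> m"
  shows "r'k V E k v = card (Eset E (Nin V E (k + 2) v) (Nin V E (k + 1) v))"
  unfolding r'k_def R'set_eq_edges[OF assms] by (rule card_image) (auto simp: inj_on_def)

section \<open>Non-adjacent pairs across the in-ball\<close>

definition R_pairs :: "'a set \<Rightarrow> ('a \<times> 'a) set \<Rightarrow> nat \<Rightarrow> 'a \<Rightarrow> ('a \<times> 'a) set" where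
  "R_pairs V E i v = (\<lambda>(x, y, z). (y, x)) ` Rset V E i v"

definition Q_pairs :: "'a set \<Rightarrow> ('a \<times> 'a) set \<Rightarrow> nat \<Rightarrow> 'a \<Rightarrow> ('a \<times> 'a) set" where
  "Q_pairs V E i v = (\<lambda>(x, y, z). (x, z)) ` Qset V E i v"

text \<open>No information is lost: the dropped vertex is always v.\<close>
lemma card_R_pairs: "card (R_pairs V E i v) = rk V E i v"
  unfolding R_pairs_def rk_def by (auto intro!: card_image simp: inj_on_def Rset_def)

lemma card_Q_pairs: "card (Q_pairs V E i v) = qk V E i v"
  unfolding Q_pairs_def qk_def by (auto intro!: card_image simp: inj_on_def Qset_def)

lemma mem_R_pairs:
  "p \<in> R_pairs V E i v \<longleftrightarrow> (\<exists>x y ws. p = (y, x) \<and> length ws = i \<and> x # ws @ [y, v] \<in> SIP V E)"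
  by (force simp: R_pairs_def Rset_def)

lemma mem_Q_pairs:
  "p \<in> Q_pairs V E i v \<longleftrightarrow> (\<exists>x z ws. p = (x, z) \<and> length ws = i \<and> x # ws @ [v, z] \<in> SIP V E)"
  by (force simp: Q_pairs_def Qset_def)

lemma R_pairs_dist:
  assumes "digraph V E" "p \<in> R_pairs V E i v"
  shows "dist_is V E (fst p) v 1" and "dist_is V E (snd p) v (i + 2)"
  using assms(2) SIP_last_two(6,7)[OF assms(1)] by (auto simp: mem_R_pairs)

lemma Q_pairs_dist:
  assumes "digraph V E" "p \<in> Q_pairs V E i v"
  shows "dist_is V E (fst p) v (i + 1)"
  using assms(2) SIP_last_two(5)[OF assms(1)] by (auto simp: mem_Q_pairs)

lemma pairs_disjoint:
  assumes "digraph V E"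
  shows "i \<noteq> j \<Longrightarrow> R_pairs V E i v \<inter> R_pairs V E j v = {}"
    and "i \<noteq> j \<Longrightarrow> Q_pairs V E i v \<inter> Q_pairs V E j v = {}"
    and "1 \<le> j \<Longrightarrow> R_pairs V E i v \<inter> Q_pairs V E j v = {}"
proof -
  show "R_pairs V E i v \<inter> R_pairs V E j v = {}" if "i \<noteq> j"
  proof (rule equals0I)
    fix p assume "p \<in> R_pairs V E i v \<inter> R_pairs V E j v"
    then have "dist_is V E (snd p) v (i + 2)" "dist_is V E (snd p) v (j + 2)"
      using R_pairs_dist(2)[OF assms] by blast+
    then have "i + 2 = j + 2" by (rule dist_unique)
    with that show False by simp
  qed
  show "Q_pairs V E i v \<inter> Q_pairs V E j v = {}" if "i \<noteq> j"
  proof (rule equals0I)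
    fix p assume "p \<in> Q_pairs V E i v \<inter> Q_pairs V E j v"
    then have "dist_is V E (fst p) v (i + 1)" "dist_is V E (fst p) v (j + 1)"
      using Q_pairs_dist[OF assms] by blast+
    then have "i + 1 = j + 1" by (rule dist_unique)
    with that show False by simp
  qed
  show "R_pairs V E i v \<inter> Q_pairs V E j v = {}" if "1 \<le> j"
  proof (rule equals0I)
    fix p assume "p \<in> R_pairs V E i v \<inter> Q_pairs V E j v"
    then have "dist_is V E (fst p) v 1" "dist_is V E (fst p) v (j + 1)"
      using R_pairs_dist(1)[OF assms] Q_pairs_dist[OF assms] by blast+
    then have "1 = j + 1" by (rule dist_unique)
    with that show False by simp
  qed
qed

text \<open>For i \<ge> k a pair (y, x) from R_i(v) crosses the in-ball of radius k + 1 without being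
  adjacent: y is inside at distance 1, x outside at distance i + 2.\<close>
lemma R_pairs_cross:
  assumes "digraph V E" "1 \<le> k" "k \<le> i"
  shows "R_pairs V E i v \<subseteq> cross_nonedges V E (inball V E (k + 1) v)"
proof
  fix p assume "p \<in> R_pairs V E i v"
  then obtain x y ws where p: "p = (y, x)" "length ws = i" "x # ws @ [y, v] \<in> SIP V E"
    by (auto simp: mem_R_pairs)
  note facts = SIP_last_two[OF assms(1) p(3,2)]
  have "y \<in> inball V E (k + 1) v"
    unfolding mem_inball using facts(3,6) by (intro conjI exI[of _ 1]) auto
  moreover have "x \<notin> inball V E (k + 1) v"
  proof
    assume "x \<in> inball V E (k + 1) v"
    then obtain j where "j \<le> k + 1" "dist_is V E x v j" by (auto simp: mem_inball)
    then show False using dist_unique[OF facts(7), of j] assms(3) by simp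
  qed
  moreover have "(x, y) \<notin> E" using facts(11) assms(2,3) by simp
  ultimately show "p \<in> cross_nonedges V E (inball V E (k + 1) v)"
    using p(1) facts(2,8) by (simp add: cross_nonedges_def)
qed

text \<open>For 1 \<le> i \<le> k a pair (x, z) from Q_i(v) crosses the in-ball of radius k + 1 without
  being adjacent: x is inside at distance i + 1, and z is outside since the edge (v, z)
  and a path of length at most k + 1 from z to v would close a short cycle.\<close>
lemma Q_pairs_cross:
  assumes "digraph V E" "m_free m V E" "1 \<le> i" "i \<le> k" "k + 2 \<le> m"
  shows "Q_pairs V E i v \<subseteq> cross_nonedges V E (inball V E (k + 1) v)"
proof
  fix p assume "p \<in> Q_pairs V E i v"
  then obtain x z ws where p: "p = (x, z)" "length ws = i" "x # ws @ [v, z] \<in> SIP V E"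
    by (auto simp: mem_Q_pairs)
  note facts = SIP_last_two[OF assms(1) p(3,2)]
  have "x \<in> inball V E (k + 1) v"
    unfolding mem_inball using facts(2,5) assms(3,4) by (intro conjI exI[of _ "i + 1"]) auto
  moreover have "z \<notin> inball V E (k + 1) v"
  proof
    assume "z \<in> inball V E (k + 1) v"
    then obtain j where j: "j \<le> k + 1" "path_len V E z v j" by (auto simp: mem_inball dist_is_def)
    have "Suc j \<le> m" using j(1) assms(5) by simp
    then show False by (rule no_short_cycle[OF assms(2) facts(1) j(2)])
  qed
  ultimately show "p \<in> cross_nonedges V E (inball V E (k + 1) v)"
    using p(1) facts(4,9,10) by (simp add: cross_nonedges_def)
qed

lemma sum_card_disjoint_family_le:
  assumes "finite P" "finite I" "\<And>i. i \<in> I \<Longrightarrow> A i \<subseteq> P"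
    and "\<And>i j. i \<in> I \<Longrightarrow> j \<in> I \<Longrightarrow> i \<noteq> j \<Longrightarrow> A i \<inter> A j = {}"
  shows "(\<Sum>i\<in>I. card (A i)) \<le> card P"
proof -
  have "(\<Sum>i\<in>I. card (A i)) = card (\<Union>i\<in>I. A i)"
    using assms by (intro card_UN_disjoint[symmetric]) (auto intro: finite_subset)
  also have "\<dots> \<le> card P" using assms by (intro card_mono) auto
  finally show ?thesis .
qed

text \<open>t_k(v) is at most the number of non-adjacent pairs across the in-ball of radius k + 1:
  the pair sets of R_i(v), k \<le> i \<le> m - 3, and of Q_i(v), 1 \<le> i \<le> k, form a disjoint
  family inside that set.\<close>
lemma tk_le_cross_nonedges:
  assumes "digraph V E" "m_free m V E" "1 \<le> k" "k + 3 \<le> m"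
  shows "tk m V E k v \<le> card (cross_nonedges V E (inball V E (k + 1) v))"
proof -
  define C where "C = cross_nonedges V E (inball V E (k + 1) v)"
  define I where "I = {k..m - 3} <+> {1..k}"
  define A where "A = case_sum (\<lambda>i. R_pairs V E i v) (\<lambda>i. Q_pairs V E i v)"
  have "tk m V E k v = (\<Sum>s\<in>I. card (A s))"
    by (simp add: I_def A_def tk_def sum.Plus comp_def card_R_pairs card_Q_pairs)
  also have "\<dots> \<le> card C"
  proof (rule sum_card_disjoint_family_le)
    have "C \<subseteq> V \<times> V" by (auto simp: C_def cross_nonedges_def inball_def Nin_def)
    moreover have "finite V" using assms(1) by (simp add: digraph_def)
    ultimately show "finite C" by (auto intro: finite_subset)
    show "finite I" by (simp add: I_def)
    show "A s \<subseteq> C" if "s \<in> I" for s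
    proof (cases s)
      case (Inl i)
      with that have "k \<le> i" by (auto simp: I_def)
      with Inl show ?thesis using R_pairs_cross[OF assms(1,3)] by (simp add: A_def C_def)
    next
      case (Inr i)
      with that have "1 \<le> i" "i \<le> k" "k + 2 \<le> m" using assms(4) by (auto simp: I_def)
      with Inr show ?thesis using Q_pairs_cross[OF assms(1,2)] by (simp add: A_def C_def)
    qed
    show "A s \<inter> A t = {}" if "s \<in> I" "t \<in> I" "s \<noteq> t" for s t
      using that pairs_disjoint[OF assms(1)] trans[OF Int_commute pairs_disjoint(3)[OF assms(1)]]
      by (cases s; cases t) (simp_all add: I_def A_def Plus_def image_iff)
  qed
  finally show ?thesis by (simp add: C_def)
qed

theorem mainTheorem8:
  fixes V :: "'a set" and E :: "('a \<times> 'a) set" and m k :: nat and v :: 'a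
  assumes "m \<ge> 4" and "digraph V E" and "m_free m V E" and "v \<in> V"
    and "1 \<le> k" and "k \<le> m - 3"
  shows "let V1 = (\<Union>i\<in>{1..k+1}. Nin V E i v); V2 = V - V1 in
     Eset E V2 V1 = Eset E (Nin V E (k+2) v) (Nin V E (k+1) v) \<and>
     card (Eset E V2 V1) = r'k V E k v \<and>
     tk m V E k v \<le> card {(a, b) \<in> V1 \<times> V2. (a, b) \<notin> E \<and> (b, a) \<notin> E}"
proof -
  have km: "k + 3 \<le> m" using assms(1,6) by simp
  have entering: "Eset E (V - inball V E (k + 1) v) (inball V E (k + 1) v)
      = Eset E (Nin V E (k + 2) v) (Nin V E (k + 1) v)"
    using edges_entering_inball[OF assms(2,3), of "k + 1"] km by simp
  show ?thesis
    unfolding Let_def inball_def[symmetric] cross_nonedges_def[symmetric]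
    using entering card_R'set[OF assms(2,3,4) km] tk_le_cross_nonedges[OF assms(2,3,5) km]
    by simp
qed

end
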